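(* Assume $K_1\subseteq K_2\subseteq\cdots\subseteq K_n\subseteq\mathbb F_q$ are subfields, $d_i=|K_i|$, $n\ge 2$. Let $\delta\ge 2$, $s\in\{1,\dots,n\}$ with $r:=d_s-\delta+1\ge 1$, and let $d=\sum_{i=1}^k(d_i-1)+\ell$ with $0\le k<n$ and $0<\ell\le d_{k+1}-1$. If $W^{(1)}(\mathcal D^{(\delta,s)}_{\mathcal X}(d))=W^{(1)}(\mathcal C_{\mathcal X}(d))$, then at least one of the following holds: (i) $k+2\le n$ and $d_{k+2}\le d_s$; (ii) $d_s\le d_{k+1}$ and $0\le d_s-(d_{k+1}-\ell)<r$.
   Context: $\mathcal X=K_1\times\cdots\times K_n=\{\boldsymbol\alpha_1,\dots,\boldsymbol\alpha_m\}$ (fixed enumeration), $m=\prod d_i$; $\Psi:\mathbb F_q[X_1,\dots,X_n]\to\mathbb F_q^m$, $f\mapsto(f(\boldsymbol\alpha_1),\dots,f(\boldsymbol\alpha_m))$. For $d\ge 0$, $\mathbb F_q[X_1,\dots,X_n]_{\le d}$ is the space of polynomials of degree at most $d$ together with $0$; the affine cartesian code is $\mathcal C_{\mathcal X}(d)=\Psi(\mathbb F_q[X_1,\dots,X_n]_{\le d})$. $\mathcal P^{(\delta,s)}_d$ is the set of $f\in\mathbb F_q[X_1,\dots,X_n]_{\le d}$ with $\deg_{X_s}f<d_s-\delta+1$, together with $0$, and $\mathcal D^{(\delta,s)}_{\mathcal X}(d)=\Psi(\mathcal P^{(\delta,s)}_d)$. $W^{(1)}(C)$ is the minimum Hamming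 distance of a linear code $C$. *)

theory Defs
  imports Main "HOL-Library.FuncSet"
begin

definition is_subfield :: "'a::field set \<Rightarrow> bool" where
  "is_subfield K \<longleftrightarrow> 0 \<in> K \<and> 1 \<in> K \<and>
     (\<forall>x\<in>K. \<forall>y\<in>K. x + y \<in> K \<and> x * y \<in> K) \<and>
     (\<forall>x\<in>K. - x \<in> K) \<and> (\<forall>x\<in>K. x \<noteq> 0 \<longrightarrow> inverse x \<in> K)"

definition grid :: "nat \<Rightarrow> (nat \<Rightarrow> 'a set) \<Rightarrow> (nat \<Rightarrow> 'a) set" where
  "grid n K = PiE {1..n} K"

definition monomials_le :: "nat \<Rightarrow> nat \<Rightarrow> (nat \<Rightarrow> nat) set" where
  "monomials_le n d = {e. (\<forall>i. e i \<noteq> 0 \<longrightarrow> i \<in> {1..n}) \<and> (\<Sum>i=1..n. e i) \<le> d}"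

definition evalp :: "nat \<Rightarrow> (nat \<Rightarrow> nat) set \<Rightarrow> ((nat \<Rightarrow> nat) \<Rightarrow> 'a::comm_ring_1) \<Rightarrow> (nat \<Rightarrow> 'a) \<Rightarrow> 'a" where
  "evalp n E c x = (\<Sum>e\<in>E. c e * (\<Prod>i=1..n. x i ^ e i))"

(* the evaluation code of the space of polynomials spanned by the monomials in E:
   codewords are functions on X (equivalent to vectors via the fixed enumeration) *)
definition eval_code :: "nat \<Rightarrow> (nat \<Rightarrow> 'a set) \<Rightarrow> (nat \<Rightarrow> nat) set \<Rightarrow> ((nat \<Rightarrow> 'a::comm_ring_1) \<Rightarrow> 'a) set" where
  "eval_code n K E = {(\<lambda>x\<in>grid n K. evalp n E c x) | c. True}"

definition affine_cartesian_code :: "nat \<Rightarrow> (nat \<Rightarrow> 'a set) \<Rightarrow> nat \<Rightarrow> ((nat \<Rightarrow> 'a::comm_ring_1) \<Rightarrow> 'a) set" where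
  "affine_cartesian_code n K d = eval_code n K (monomials_le n d)"

definition restricted_code :: "nat \<Rightarrow> (nat \<Rightarrow> 'a set) \<Rightarrow> nat \<Rightarrow> nat \<Rightarrow> nat \<Rightarrow> ((nat \<Rightarrow> 'a::comm_ring_1) \<Rightarrow> 'a) set" where
  "restricted_code n K \<delta> s d =
     eval_code n K {e \<in> monomials_le n d. int (e s) < int (card (K s)) - int \<delta> + 1}"

definition hamming_wt :: "(nat \<Rightarrow> 'a) set \<Rightarrow> ((nat \<Rightarrow> 'a) \<Rightarrow> 'a::zero) \<Rightarrow> nat" where
  "hamming_wt X v = card {x\<in>X. v x \<noteq> 0}"

(* minimum distance W^(1) of a linear code = minimum weight of a nonzero codeword *)
definition min_dist :: "(nat \<Rightarrow> 'a) set \<Rightarrow> ((nat \<Rightarrow> 'a) \<Rightarrow> 'a::zero) set \<Rightarrow> nat" where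
  "min_dist X C = Min {hamming_wt X v | v. v \<in> C \<and> (\<exists>x\<in>X. v x \<noteq> 0)}"

end

(*
  Suppose neither (i) nor (ii) holds and put W = (d_{k+1} - l) d_{k+2} ... d_n.  The affine cartesian
  code contains a codeword of weight W: a product of linear factors vanishing on all of K_i except 0
  for i <= k and on l points of K_{k+1}.  A nonzero codeword of the restricted code, on the other
  hand, has by the footprint bound weight at least prod_i b_i with b_i = d_i - a_i, where a is a
  (reduced) monomial of it, so that sum_i (d_i - b_i) <= d and b_s >= delta.  Without the last
  constraint the minimum of prod_i b_i is W, attained by spending the budget d greedily on the
  smallest d_i; when (i) and (ii) both fail, the constraint b_s >= delta forces every admissible
  product strictly above W.  Hence the minimum distance of the restricted code exceeds W.
*)
theory Submission
  imports Defs "HOL-Computational_Algebra.Polynomial"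
begin

section \<open>Finite subfields\<close>

lemma card_subfield_ge_2:
  fixes K :: "'a::field set"
  assumes "is_subfield K" and "finite K"
  shows "2 \<le> card K"
proof -
  have "{0, 1} \<subseteq> K" using assms(1) unfolding is_subfield_def by auto
  then have "card {0::'a, 1} \<le> card K" using assms(2) by (rule card_mono[rotated])
  then show ?thesis by simp
qed

lemma subfield_power_card_minus_1:
  fixes K :: "'a::field set"
  assumes sf: "is_subfield K" and fin: "finite K" and x: "x \<in> K" "x \<noteq> 0"
  shows "x ^ (card K - 1) = 1"
proof -
  let ?U = "K - {0}"
  have inj: "inj_on ((*) x) ?U" using x by (auto simp: inj_on_def)
  have "(*) x ` ?U \<subseteq> ?U" using sf x unfolding is_subfield_def by auto
  then have perm: "(*) x ` ?U = ?U"
    using fin card_subset_eq card_image[OF inj] by (metis finite_Diff)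
  have "(\<Prod>y\<in>?U. y) = (\<Prod>y\<in>?U. x * y)"
    using prod.reindex[OF inj, of id] perm by simp
  also have "\<dots> = x ^ card ?U * (\<Prod>y\<in>?U. y)" by (simp add: prod.distrib)
  finally have "x ^ card ?U = 1"
    using fin by (metis DiffD2 finite_Diff mult_cancel_right2 prod_zero_iff singletonI)
  moreover have "card ?U = card K - 1" using sf fin unfolding is_subfield_def by simp
  ultimately show ?thesis by simp
qed

text \<open>On a field with \<open>m\<close> elements \<open>x\<^sup>e\<close> only depends on \<open>e\<close> modulo \<open>m - 1\<close>, except that
  \<open>0\<^sup>0 = 1\<close>: positive exponents must stay positive.\<close>

definition reduce_exp :: "nat \<Rightarrow> nat \<Rightarrow> nat" where
  "reduce_exp m e = (if e = 0 then 0 else (e - 1) mod (m - 1) + 1)"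

lemma reduce_exp_le: "reduce_exp m e \<le> e"
  unfolding reduce_exp_def by (auto simp: le_diff_conv)
    (metis Suc_pred mod_less_eq_dividend Suc_le_mono neq0_conv)

lemma reduce_exp_less:
  assumes "2 \<le> m" shows "reduce_exp m e < m"
proof -
  have "(e - 1) mod (m - 1) < m - 1" using assms by (intro mod_less_divisor) simp
  then have "(e - 1) mod (m - 1) + 1 < m" using assms by linarith
  then show ?thesis unfolding reduce_exp_def using assms by auto
qed

lemma reduce_exp_eq: "e < m \<Longrightarrow> reduce_exp m e = e"
  unfolding reduce_exp_def by auto

lemma subfield_power_reduce_exp:
  fixes K :: "'a::field set"
  assumes sf: "is_subfield K" and fin: "finite K" and x: "x \<in> K"
  shows "x ^ reduce_exp (card K) e = x ^ e"
proof (cases "e = 0 \<or> x = 0")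
  case True
  then show ?thesis by (auto simp: reduce_exp_def)
next
  case False
  let ?q = "(e - 1) div (card K - 1)" and ?r = "(e - 1) mod (card K - 1)"
  have "e = ?q * (card K - 1) + ?r + 1"
    using False by (metis div_mult_mod_eq Suc_pred' neq0_conv add.commute plus_1_eq_Suc)
  then have "x ^ e = (x ^ (card K - 1)) ^ ?q * x ^ (?r + 1)"
    by (metis add.assoc mult.commute power_add power_mult)
  then show ?thesis
    using subfield_power_card_minus_1[OF sf fin x] False by (simp add: reduce_exp_def)
qed

section \<open>The footprint bound\<close>

lemma finite_grid [simp]: "finite (grid n (K :: nat \<Rightarrow> 'a::finite set))"
  unfolding grid_def by (simp add: finite_PiE)

lemma card_grid_Suc:
  fixes K :: "nat \<Rightarrow> 'a::finite set"
  shows "card {x \<in> grid (Suc m) K. P x} = (\<Sum>x\<in>grid m K. card {y \<in> K (Suc m). P (x(Suc m := y))})"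
proof -
  let ?N = "Suc m"
  let ?S = "SIGMA x:grid m K. {y \<in> K ?N. P (x(?N := y))}"
  let ?h = "\<lambda>(x, y). x(?N := y)"
  have inj: "inj_on ?h ?S"
  proof (rule inj_onI, clarify)
    fix x1 y1 x2 y2
    assume a: "x1 \<in> grid m K" "x2 \<in> grid m K" "x1(?N := y1) = x2(?N := y2)"
    have "x1 ?N = undefined" "x2 ?N = undefined"
      using a(1,2) unfolding grid_def by (auto simp: PiE_def extensional_def)
    moreover have "y1 = y2" using fun_cong[OF a(3), of ?N] by simp
    moreover have "x1 i = x2 i" for i using fun_cong[OF a(3), of i] calculation by (cases "i = ?N") auto
    ultimately show "x1 = x2 \<and> y1 = y2" by auto
  qed
  have "?h ` ?S = {x \<in> grid ?N K. P x}"
  proof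
    show "?h ` ?S \<subseteq> {x \<in> grid ?N K. P x}"
      by (auto simp: grid_def PiE_def extensional_def Pi_def le_Suc_eq)
  next
    show "{x \<in> grid ?N K. P x} \<subseteq> ?h ` ?S"
    proof
      fix x assume x: "x \<in> {x \<in> grid ?N K. P x}"
      have "x(?N := undefined) \<in> grid m K" using x by (auto simp: grid_def PiE_def extensional_def)
      moreover have "x ?N \<in> K ?N" using x by (auto simp: grid_def PiE_def)
      ultimately show "x \<in> ?h ` ?S" using x
        by (auto intro!: image_eqI[where x="(x(?N := undefined), x ?N)"])
    qed
  qed
  then have "card {x \<in> grid ?N K. P x} = card ?S" using card_image[OF inj] by simp
  also have "\<dots> = (\<Sum>x\<in>grid m K. card {y \<in> K ?N. P (x(?N := y))})"
    by (rule card_SigmaI) auto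
  finally show ?thesis .
qed

lemma card_nonroots_ge:
  fixes p :: "'a::idom poly"
  assumes "p \<noteq> 0" and "degree p \<le> t" and "finite A"
  shows "card A - t \<le> card {y \<in> A. poly p y \<noteq> 0}"
proof -
  have roots: "card {y. poly p y = 0} \<le> t" using card_poly_roots_bound[OF assms(1)] assms(2) by linarith
  have "card A - card {y. poly p y = 0} \<le> card (A - {y. poly p y = 0})"
    by (rule diff_card_le_card_Diff) (simp add: poly_roots_finite assms(1))
  also have "A - {y. poly p y = 0} = {y \<in> A. poly p y \<noteq> 0}" by auto
  finally show ?thesis using roots by linarith
qed

definition last_var_poly :: "nat \<Rightarrow> (nat \<Rightarrow> nat) set \<Rightarrow> ((nat \<Rightarrow> nat) \<Rightarrow> 'a::comm_ring_1) \<Rightarrow> (nat \<Rightarrow> 'a) \<Rightarrow> 'a poly" where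
  "last_var_poly m E c x = (\<Sum>e\<in>E. monom (c e * (\<Prod>i=1..m. x i ^ e i)) (e (Suc m)))"

lemma poly_last_var_poly: "poly (last_var_poly m E c x) y = evalp (Suc m) E c (x(Suc m := y))"
proof -
  have "(\<Prod>i=1..Suc m. (x(Suc m := y)) i ^ e i) = (\<Prod>i=1..m. x i ^ e i) * y ^ e (Suc m)" for e
  proof -
    have "(\<Prod>i=1..m. (x(Suc m := y)) i ^ e i) = (\<Prod>i=1..m. x i ^ e i)"
      by (rule prod.cong) auto
    then show ?thesis by (simp add: atLeastAtMostSuc_conv mult.commute)
  qed
  then show ?thesis
    unfolding evalp_def last_var_poly_def by (simp add: poly_sum poly_monom mult.assoc)
qed

lemma coeff_last_var_poly:
  assumes "finite E"
  shows "coeff (last_var_poly m E c x) j = evalp m {e \<in> E. e (Suc m) = j} c x"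
  unfolding last_var_poly_def evalp_def using assms
  by (simp add: coeff_sum coeff_monom sum.inter_filter)

lemma degree_last_var_poly_le:
  assumes "finite E" and "\<forall>e\<in>E. c e \<noteq> 0 \<longrightarrow> e (Suc m) \<le> t"
  shows "degree (last_var_poly m E c x) \<le> t"
proof (rule degree_le, intro allI impI)
  fix j assume "t < j"
  then have "\<forall>e\<in>{e \<in> E. e (Suc m) = j}. c e = 0" using assms(2) by force
  then show "coeff (last_var_poly m E c x) j = 0" using assms(1) by (simp add: coeff_last_var_poly evalp_def)
qed

text \<open>Induction on the number of variables: among the monomials with nonzero coefficient take those
  with maximal exponent \<open>t\<close> of the last variable; their part in the other variables is not identically
  zero, and wherever it does not vanish, the remaining univariate polynomial of degree \<open>t\<close> is nonzero.\<close>

lemma footprint_bound: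
  fixes K :: "nat \<Rightarrow> 'a::{finite,field} set" and c :: "(nat \<Rightarrow> nat) \<Rightarrow> 'a"
  assumes "finite E" and "\<forall>e\<in>E. \<forall>i\<in>{1..n}. e i < card (K i)"
    and "\<forall>e1\<in>E. \<forall>e2\<in>E. (\<forall>i\<in>{1..n}. e1 i = e2 i) \<longrightarrow> e1 = e2"
    and "\<exists>e\<in>E. c e \<noteq> 0"
  shows "\<exists>a\<in>E. c a \<noteq> 0 \<and> (\<Prod>i=1..n. card (K i) - a i) \<le> card {x \<in> grid n K. evalp n E c x \<noteq> 0}"
  using assms
proof (induction n arbitrary: E)
  case 0
  then obtain e where e: "e \<in> E" "c e \<noteq> 0" by blast
  then have "E = {e}" using "0.prems"(3) by auto
  moreover have "grid 0 K = {\<lambda>_. undefined}" by (simp add: grid_def)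
  ultimately show ?case using e by (auto simp: evalp_def)
next
  case (Suc m)
  let ?N = "Suc m"
  let ?T = "{e ?N | e. e \<in> E \<and> c e \<noteq> 0}"
  define t where "t = Max ?T"
  have fin: "finite ?T" using Suc.prems(1) by simp
  have tT: "t \<in> ?T" unfolding t_def using fin Suc.prems(4) by (intro Max_in) auto
  have t_max: "e ?N \<le> t" if "e \<in> E" "c e \<noteq> 0" for e
    unfolding t_def using fin that by (intro Max_ge) auto
  define Et where "Et = {e \<in> E. e ?N = t}"
  have "\<exists>a\<in>Et. c a \<noteq> 0 \<and> (\<Prod>i=1..m. card (K i) - a i) \<le> card {x \<in> grid m K. evalp m Et c x \<noteq> 0}"
  proof (rule Suc.IH)
    show "\<forall>e1\<in>Et. \<forall>e2\<in>Et. (\<forall>i\<in>{1..m}. e1 i = e2 i) \<longrightarrow> e1 = e2"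
    proof (intro ballI impI)
      fix e1 e2 assume e: "e1 \<in> Et" "e2 \<in> Et" "\<forall>i\<in>{1..m}. e1 i = e2 i"
      then have "\<forall>i\<in>{1..?N}. e1 i = e2 i" unfolding Et_def by (auto simp: le_Suc_eq)
      then show "e1 = e2" using Suc.prems(3) e(1,2) unfolding Et_def by blast
    qed
  qed (use Suc.prems(1,2) tT in \<open>auto simp: Et_def\<close>)
  then obtain a where a: "a \<in> E" "c a \<noteq> 0" "a ?N = t"
    and IH: "(\<Prod>i=1..m. card (K i) - a i) \<le> card {x \<in> grid m K. evalp m Et c x \<noteq> 0}"
    unfolding Et_def by blast
  let ?p = "last_var_poly m E c"
  have deg: "degree (?p x) \<le> t" for x
    using Suc.prems(1) t_max by (intro degree_last_var_poly_le) auto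
  have fiber: "card (K ?N) - t \<le> card {y \<in> K ?N. poly (?p x) y \<noteq> 0}" if "evalp m Et c x \<noteq> 0" for x
  proof (rule card_nonroots_ge[OF _ deg])
    show "?p x \<noteq> 0" using that coeff_last_var_poly[OF Suc.prems(1), of m c x t] unfolding Et_def by auto
  qed simp
  have "(\<Prod>i=1..?N. card (K i) - a i) = (\<Prod>i=1..m. card (K i) - a i) * (card (K ?N) - t)"
    using a(3) by (simp add: atLeastAtMostSuc_conv mult.commute)
  also have "\<dots> \<le> (\<Sum>x\<in>{x \<in> grid m K. evalp m Et c x \<noteq> 0}. card (K ?N) - t)"
    using IH by simp
  also have "\<dots> \<le> (\<Sum>x\<in>{x \<in> grid m K. evalp m Et c x \<noteq> 0}. card {y \<in> K ?N. poly (?p x) y \<noteq> 0})"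
    by (rule sum_mono) (use fiber in auto)
  also have "\<dots> \<le> (\<Sum>x\<in>grid m K. card {y \<in> K ?N. poly (?p x) y \<noteq> 0})"
    by (rule sum_mono2) auto
  also have "\<dots> = card {x \<in> grid ?N K. evalp ?N E c x \<noteq> 0}"
    by (simp add: card_grid_Suc poly_last_var_poly)
  finally show ?case using a by blast
qed

section \<open>Codewords vanishing on a box\<close>

definition zero_extend :: "nat \<Rightarrow> (nat \<Rightarrow> nat) \<Rightarrow> nat \<Rightarrow> nat" where
  "zero_extend n g = (\<lambda>i. if i \<in> {1..n} then g i else 0)"

lemma inj_on_zero_extend: "inj_on (zero_extend n) (PiE {1..n} A)"
proof (rule inj_onI)
  fix g1 g2 assume g: "g1 \<in> PiE {1..n} A" "g2 \<in> PiE {1..n} A" "zero_extend n g1 = zero_extend n g2"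
  show "g1 = g2"
  proof
    fix i show "g1 i = g2 i"
    proof (cases "i \<in> {1..n}")
      case True
      then show ?thesis using fun_cong[OF g(3), of i] by (simp add: zero_extend_def)
    next
      case False
      then show ?thesis using PiE_arb[OF g(1) False] PiE_arb[OF g(2) False] by simp
    qed
  qed
qed

lemma zero_extend_restrict:
  "e \<in> monomials_le n d \<Longrightarrow> zero_extend n (restrict e {1..n}) = e"
  unfolding monomials_le_def zero_extend_def by (auto simp: fun_eq_iff)

lemma monomials_le_subset_zero_extend: "monomials_le n d \<subseteq> zero_extend n ` PiE {1..n} (\<lambda>_. {..d})"
proof
  fix e assume e: "e \<in> monomials_le n d"
  have "e i \<le> d" if "i \<in> {1..n}" for i
    using e member_le_sum[of i "{1..n}" e] that unfolding monomials_le_def by simp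
  then have "restrict e {1..n} \<in> PiE {1..n} (\<lambda>_. {..d})" by auto
  then show "e \<in> zero_extend n ` PiE {1..n} (\<lambda>_. {..d})"
    using zero_extend_restrict[OF e] by (metis image_eqI)
qed

lemma finite_monomials_le: "finite (monomials_le n d)"
  by (rule finite_subset[OF monomials_le_subset_zero_extend]) (auto intro: finite_PiE)

lemma prod_poly_eq_sum_zero_extend:
  fixes h :: "nat \<Rightarrow> 'a::comm_ring_1 poly"
  shows "(\<Prod>i=1..n. poly (h i) (x i))
       = (\<Sum>e\<in>zero_extend n ` PiE {1..n} (\<lambda>i. {..degree (h i)}).
            (\<Prod>i=1..n. coeff (h i) (e i)) * (\<Prod>i=1..n. x i ^ e i))"
proof -
  let ?P = "PiE {1..n} (\<lambda>i. {..degree (h i)})"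
  have "(\<Prod>i=1..n. poly (h i) (x i)) = (\<Prod>i=1..n. \<Sum>j\<le>degree (h i). coeff (h i) j * x i ^ j)"
    by (simp add: poly_altdef)
  also have "\<dots> = (\<Sum>g\<in>?P. \<Prod>i=1..n. coeff (h i) (g i) * x i ^ g i)"
    by (rule prod_sum_PiE) auto
  also have "\<dots> = (\<Sum>g\<in>?P. \<Prod>i=1..n. coeff (h i) (zero_extend n g i) * x i ^ zero_extend n g i)"
    by (intro sum.cong refl prod.cong) (auto simp: zero_extend_def)
  also have "\<dots> = (\<Sum>e\<in>zero_extend n ` ?P. \<Prod>i=1..n. coeff (h i) (e i) * x i ^ e i)"
    by (simp only: sum.reindex[OF inj_on_zero_extend] comp_def)
  finally show ?thesis by (simp add: prod.distrib)
qed

lemma evalp_prod_coeffs: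
  fixes h :: "nat \<Rightarrow> 'a::comm_ring_1 poly"
  assumes deg: "(\<Sum>i=1..n. degree (h i)) \<le> d"
  shows "evalp n (monomials_le n d) (\<lambda>e. \<Prod>i=1..n. coeff (h i) (e i)) x = (\<Prod>i=1..n. poly (h i) (x i))"
proof -
  let ?P = "PiE {1..n} (\<lambda>i. {..degree (h i)})"
  let ?c = "\<lambda>e. \<Prod>i=1..n. coeff (h i) (e i)"
  have sub: "zero_extend n ` ?P \<subseteq> monomials_le n d"
  proof
    fix e assume "e \<in> zero_extend n ` ?P"
    then obtain g where g: "g \<in> ?P" "e = zero_extend n g" by blast
    have "(\<Sum>i=1..n. e i) \<le> (\<Sum>i=1..n. degree (h i))"
      using g by (intro sum_mono) (auto simp: zero_extend_def)
    then show "e \<in> monomials_le n d" using deg g(2) unfolding monomials_le_def zero_extend_def by auto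
  qed
  have zero: "?c e = 0" if e: "e \<in> monomials_le n d - zero_extend n ` ?P" for e
  proof -
    have "\<exists>i\<in>{1..n}. degree (h i) < e i"
    proof (rule ccontr)
      assume "\<not> ?thesis"
      then have "restrict e {1..n} \<in> ?P" by (auto simp: not_less)
      then show False using e zero_extend_restrict[of e n d] by (metis DiffD1 DiffD2 image_eqI)
    qed
    then show ?thesis by (auto intro: prod_zero coeff_eq_0)
  qed
  show ?thesis
    unfolding evalp_def prod_poly_eq_sum_zero_extend
    by (rule sum.mono_neutral_right[OF finite_monomials_le sub]) (use zero in auto)
qed

lemma hamming_wt_pos_imp_nonzero:
  assumes "0 < hamming_wt X v"
  shows "\<exists>x\<in>X. v x \<noteq> 0"
proof (rule ccontr)
  assume "\<not> ?thesis"
  then have "{x \<in> X. v x \<noteq> 0} = {}" by auto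
  then show False using assms unfolding hamming_wt_def by (simp only: card.empty less_irrefl)
qed

lemma vanishing_product_in_affine_cartesian_code:
  fixes K B :: "nat \<Rightarrow> 'a::field set"
  assumes "(\<Sum>i=1..n. card (B i)) \<le> d"
  shows "(\<lambda>x\<in>grid n K. \<Prod>i=1..n. \<Prod>b\<in>B i. x i - b) \<in> affine_cartesian_code n K d"
proof -
  define h where "h i = (\<Prod>b\<in>B i. [:-b, 1:])" for i
  have "degree (h i) = card (B i)" for i
    unfolding h_def by (subst degree_prod_eq_sum_degree) auto
  then have "(\<Prod>i=1..n. \<Prod>b\<in>B i. x i - b)
      = evalp n (monomials_le n d) (\<lambda>e. \<Prod>i=1..n. coeff (h i) (e i)) x" for x
    using evalp_prod_coeffs[where h=h and d=d] assms by (simp add: h_def poly_prod)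
  then show ?thesis unfolding affine_cartesian_code_def eval_code_def by auto
qed

lemma hamming_wt_vanishing_product:
  fixes K B :: "nat \<Rightarrow> 'a::{finite,field} set"
  shows "hamming_wt (grid n K) (\<lambda>x\<in>grid n K. \<Prod>i=1..n. \<Prod>b\<in>B i. x i - b) = (\<Prod>i=1..n. card (K i - B i))"
proof -
  have "{x \<in> grid n K. (\<lambda>x\<in>grid n K. \<Prod>i=1..n. \<Prod>b\<in>B i. x i - b) x \<noteq> 0} = PiE {1..n} (\<lambda>i. K i - B i)"
    unfolding grid_def by (auto simp: PiE_def Pi_def)
  then show ?thesis unfolding hamming_wt_def by (simp add: card_PiE)
qed

lemma prod_split_at:
  fixes f :: "nat \<Rightarrow> 'b::comm_monoid_mult"
  assumes "k < n"
  shows "(\<Prod>i=1..n. f i) = (\<Prod>i=1..k. f i) * (f (k+1) * (\<Prod>i=k+2..n. f i))"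
proof -
  have "{1..n} = {1..k} \<union> ({k+1} \<union> {k+2..n})" using assms by auto
  then show ?thesis by (simp add: prod.union_disjoint mult.left_commute)
qed

lemma sum_split_at:
  fixes f :: "nat \<Rightarrow> 'b::comm_monoid_add"
  assumes "k < n"
  shows "(\<Sum>i=1..n. f i) = (\<Sum>i=1..k. f i) + (f (k+1) + (\<Sum>i=k+2..n. f i))"
proof -
  have "{1..n} = {1..k} \<union> ({k+1} \<union> {k+2..n})" using assms by auto
  then show ?thesis by (simp add: sum.union_disjoint add.left_commute)
qed

text \<open>The witness vanishes on \<open>K\<^sub>i - {0}\<close> for \<open>i \<le> k\<close> and on \<open>\<ell>\<close> points of \<open>K\<^sub>k\<^sub>+\<^sub>1\<close>.\<close>

lemma affine_cartesian_code_weight: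
  fixes K :: "nat \<Rightarrow> 'a::{finite,field} set"
  assumes sub: "\<forall>i\<in>{1..n}. is_subfield (K i)" and k: "k < n" and l: "l < card (K (k+1))"
  shows "\<exists>v\<in>affine_cartesian_code n K ((\<Sum>i=1..k. card (K i) - 1) + l). (\<exists>x\<in>grid n K. v x \<noteq> 0) \<and>
           hamming_wt (grid n K) v = (card (K (k+1)) - l) * (\<Prod>i=k+2..n. card (K i))"
proof -
  obtain L where L: "L \<subseteq> K (k+1)" "card L = l" using obtain_subset_with_card_n[of l "K (k+1)"] l by auto
  define B where "B i = (if i \<le> k then K i - {0} else if i = k+1 then L else {})" for i
  have zero: "0 \<in> K i" if "i \<in> {1..n}" for i using sub that unfolding is_subfield_def by auto
  have deg: "(\<Sum>i=1..n. card (B i)) = (\<Sum>i=1..k. card (K i) - 1) + l"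
    using k L zero unfolding sum_split_at[OF k] by (auto simp: B_def intro!: sum.cong)
  have wt: "(\<Prod>i=1..n. card (K i - B i)) = (card (K (k+1)) - l) * (\<Prod>i=k+2..n. card (K i))"
  proof -
    have "K i - B i = {0}" if "i \<in> {1..k}" for i
      using zero[of i] that k by (auto simp: B_def)
    moreover have "card (K (k+1) - B (k+1)) = card (K (k+1)) - l"
      using L by (simp add: B_def card_Diff_subset)
    moreover have "K i - B i = K i" if "i \<in> {k+2..n}" for i using that by (simp add: B_def)
    ultimately show ?thesis unfolding prod_split_at[OF k] by simp
  qed
  let ?v = "\<lambda>x\<in>grid n K. \<Prod>i=1..n. \<Prod>b\<in>B i. x i - b"
  have v: "?v \<in> affine_cartesian_code n K ((\<Sum>i=1..k. card (K i) - 1) + l)"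
    by (rule vanishing_product_in_affine_cartesian_code) (use deg in linarith)
  have v_wt: "hamming_wt (grid n K) ?v = (card (K (k+1)) - l) * (\<Prod>i=k+2..n. card (K i))"
    by (simp only: hamming_wt_vanishing_product wt)
  have "0 < (card (K (k+1)) - l) * (\<Prod>i=k+2..n. card (K i))"
  proof -
    have "0 < card (K i)" if "i \<in> {k+2..n}" for i
      using zero[of i] that by (auto simp: card_gt_0_iff)
    then show ?thesis using l by (simp add: prod_pos)
  qed
  then have "\<exists>x\<in>grid n K. ?v x \<noteq> 0" unfolding v_wt[symmetric] by (rule hamming_wt_pos_imp_nonzero)
  then show ?thesis using v v_wt by blast
qed

section \<open>Minimising the footprint under a degree budget\<close>

lemma diff_mult_le_mult_diff:
  fixes a z f :: nat
  assumes "a \<le> f"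
  shows "(a - z) * f \<le> a * (f - z)"
proof -
  have "a * z \<le> f * z" using assms by simp
  then show ?thesis by (simp add: diff_mult_distrib diff_mult_distrib2 diff_le_mono2 mult.commute)
qed

lemma diff_mult_less_mult_diff:
  fixes a z f :: nat
  assumes "0 < z" "z \<le> a" "a < f"
  shows "(a - z) * f < a * (f - z)"
proof -
  have "a * z < z * f" "z * f \<le> a * f" using assms by (simp_all add: mult.commute)
  moreover have "(a - z) * f = a * f - z * f" by (rule diff_mult_distrib)
  moreover have "a * (f - z) = a * f - a * z" by (simp add: diff_mult_distrib2)
  ultimately show ?thesis by linarith
qed

lemma le_Suc_mult_diff:
  fixes u w :: nat
  assumes "u < w"
  shows "w \<le> (u + 1) * (w - u)"
proof -
  have "u * (u + 1) \<le> u * w" using assms by (intro mult_le_mono2) simp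
  then show ?thesis using assms by (simp add: diff_mult_distrib2 mult.commute)
qed

lemma less_Suc_mult_diff:
  fixes u w :: nat
  assumes "0 < u" "u + 1 < w"
  shows "w < (u + 1) * (w - u)"
proof -
  have "2 * u \<le> u * (w - u)" using assms by (simp add: mult.commute)
  moreover have "(u + 1) * (w - u) = (w - u) + u * (w - u)" by simp
  ultimately show ?thesis using assms by linarith
qed

text \<open>For sorted \<open>d\<^sub>1 \<le> \<dots> \<le> d\<^sub>m\<close>, \<open>min_footprint [d\<^sub>1, \<dots>, d\<^sub>m] A\<close> is the least value of
  \<open>\<Prod>\<^sub>i b\<^sub>i\<close> over \<open>1 \<le> b\<^sub>i \<le> d\<^sub>i\<close> with \<open>\<Sum>\<^sub>i (d\<^sub>i - b\<^sub>i) \<le> A\<close>: the budget \<open>A\<close> is spent greedily on the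
  smallest factors. For \<open>A = \<Sum>\<^sub>i\<^sub>\<le>\<^sub>k (d\<^sub>i - 1) + \<ell>\<close> this is the minimum distance
  \<open>(d\<^sub>k\<^sub>+\<^sub>1 - \<ell>) d\<^sub>k\<^sub>+\<^sub>2 \<cdots> d\<^sub>m\<close> of the affine cartesian code.\<close>

fun min_footprint :: "nat list \<Rightarrow> nat \<Rightarrow> nat" where
  "min_footprint [] A = 1"
| "min_footprint (x # xs) A =
     (if x - 1 \<le> A then min_footprint xs (A - (x - 1)) else (x - A) * prod_list xs)"

lemma min_footprint_append:
  "min_footprint (xs @ ys) (sum_list (map (\<lambda>x. x - 1) xs) + A) = min_footprint ys A"
  by (induction xs) (auto simp: add.assoc)

lemma min_footprint_le_Suc_mult:
  assumes "sorted ds" and "\<forall>x\<in>set ds. u + 1 \<le> x"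
  shows "min_footprint ds Y \<le> (u + 1) * min_footprint ds (Y + u)"
  using assms
proof (induction ds arbitrary: Y)
  case Nil
  then show ?case by simp
next
  case (Cons e es)
  have es: "sorted es" "\<forall>x\<in>set es. u + 1 \<le> x" and e: "u + 1 \<le> e" using Cons.prems by auto
  consider "e - 1 \<le> Y" | "Y < e - 1" "e - 1 \<le> Y + u" | "Y + u < e - 1" by linarith
  then show ?case
  proof cases
    case 1
    then show ?thesis using Cons.IH[OF es, of "Y - (e - 1)"] by (simp add: add.commute)
  next
    case 2
    define Z where "Z = Y + u - (e - 1)"
    have Zu: "Z + 1 \<le> u" and eY: "e - Y = u + 1 - Z" using 2 e unfolding Z_def by linarith+
    have "(u + 1 - Z) * prod_list es \<le> (u + 1) * min_footprint es Z"
    proof (cases es)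
      case Nil
      then show ?thesis by simp
    next
      case (Cons f fs)
      then have f: "u + 1 \<le> f" using es by auto
      then have "(u + 1 - Z) * f \<le> (u + 1) * (f - Z)" by (rule diff_mult_le_mult_diff)
      moreover have "\<not> f - 1 \<le> Z" using Zu f by linarith
      then have "min_footprint es Z = (f - Z) * prod_list fs" using Cons by simp
      ultimately show ?thesis using Cons by (simp add: mult.assoc[symmetric])
    qed
    moreover have "min_footprint (e # es) Y = (e - Y) * prod_list es" using 2 by simp
    moreover have "min_footprint (e # es) (Y + u) = min_footprint es Z" using 2 unfolding Z_def by simp
    ultimately show ?thesis using eY by simp
  next
    case 3
    then have "e - Y \<le> (u + 1) * (e - (Y + u))"
      using le_Suc_mult_diff[of u "e - Y"] by (simp add: diff_diff_add)
    then have "(e - Y) * prod_list es \<le> (u + 1) * (e - (Y + u)) * prod_list es"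
      by (rule mult_le_mono1)
    moreover have "min_footprint (e # es) Y = (e - Y) * prod_list es" using 3 by simp
    moreover have "min_footprint (e # es) (Y + u) = (e - (Y + u)) * prod_list es" using 3 by simp
    ultimately show ?thesis by (simp only: mult.assoc)
  qed
qed

lemma min_footprint_le_prod:
  assumes "sorted (map D is)" and "\<forall>i\<in>set is. 1 \<le> b i \<and> b i \<le> D i"
    and "(\<Sum>i\<leftarrow>is. D i - b i) \<le> A"
  shows "min_footprint (map D is) A \<le> (\<Prod>i\<leftarrow>is. b i)"
  using assms
proof (induction "is" arbitrary: A)
  case Nil
  then show ?case by simp
next
  case (Cons j js)
  let ?a = "D j - b j"
  have js: "sorted (map D js)" "\<forall>i\<in>set js. 1 \<le> b i \<and> b i \<le> D i"
    "(\<Sum>i\<leftarrow>js. D i - b i) \<le> A - ?a" using Cons.prems by auto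
  have bj: "1 \<le> b j" "b j \<le> D j" "?a \<le> A" and ge: "\<forall>x\<in>set (map D js). D j \<le> x"
    using Cons.prems by auto
  have "min_footprint (map D (j # js)) A \<le> b j * min_footprint (map D js) (A - ?a)"
  proof (cases "D j - 1 \<le> A")
    case True
    have "\<forall>x\<in>set (map D js). b j - 1 + 1 \<le> x" using ge bj by auto
    from min_footprint_le_Suc_mult[OF js(1) this, of "A - (D j - 1)"]
    have "min_footprint (map D js) (A - (D j - 1)) \<le> b j * min_footprint (map D js) (A - ?a)"
      using True bj by (simp add: add.commute)
    then show ?thesis using True by simp
  next
    case False
    show ?thesis
    proof (cases js)
      case Nil
      then show ?thesis using False bj by simp
    next
      case (Cons j2 js2)
      have "D j \<le> D j2" using ge Cons by simp
      then have "(b j - (A - ?a)) * D j2 \<le> b j * (D j2 - (A - ?a))"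
        using bj by (intro diff_mult_le_mult_diff) simp
      moreover have "D j - A = b j - (A - ?a)" using bj by linarith
      ultimately have "(D j - A) * D j2 * prod_list (map D js2)
          \<le> b j * (D j2 - (A - ?a)) * prod_list (map D js2)"
        by (metis mult_le_mono1)
      then show ?thesis using Cons False \<open>D j \<le> D j2\<close> by (simp add: mult.assoc)
    qed
  qed
  also have "\<dots> \<le> b j * (\<Prod>i\<leftarrow>js. b i)" using Cons.IH[OF js] by simp
  finally show ?case by simp
qed

definition indices_except :: "nat \<Rightarrow> nat \<Rightarrow> nat list" where
  "indices_except n s = [1..<s] @ [Suc s..<Suc n]"

lemma upt_Suc_split_at:
  assumes "s \<in> {1..n}"
  shows "[1..<Suc n] = [1..<s] @ s # [Suc s..<Suc n]"
proof -
  have "[1..<Suc n] = [1..<s] @ [s..<Suc n]" using assms upt_add_eq_append[of 1 s "Suc n - s"] by simp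
  also have "[s..<Suc n] = s # [Suc s..<Suc n]" using assms by (intro upt_conv_Cons) simp
  finally show ?thesis .
qed

lemma indices_except_append:
  assumes "s \<in> {1..m}" and "m \<le> n"
  shows "indices_except n s = indices_except m s @ [Suc m..<Suc n]"
  using assms upt_add_eq_append[of "Suc s" "Suc m" "n - m"] unfolding indices_except_def by auto

lemma sorted_indices_except: "sorted (indices_except n s)"
  unfolding indices_except_def by (auto simp: sorted_append)

lemma set_indices_except: "s \<le> n \<Longrightarrow> set (indices_except n s) \<subseteq> {1..n}"
  unfolding indices_except_def by auto

lemma sum_indices_except:
  fixes f :: "nat \<Rightarrow> 'b::comm_monoid_add"
  assumes "s \<in> {1..n}"
  shows "(\<Sum>i=1..n. f i) = f s + (\<Sum>i\<leftarrow>indices_except n s. f i)"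
proof -
  have "(\<Sum>i=1..n. f i) = (\<Sum>i\<leftarrow>[1..<Suc n]. f i)"
    by (simp only: interv_sum_list_conv_sum_set_nat set_upt atLeastLessThanSuc_atLeastAtMost)
  then show ?thesis
    unfolding upt_Suc_split_at[OF assms] indices_except_def by (simp add: add.left_commute)
qed

lemma prod_list_upt_Suc:
  fixes f :: "nat \<Rightarrow> 'b::comm_monoid_mult"
  shows "(\<Prod>i\<leftarrow>[a..<Suc b]. f i) = (\<Prod>i=a..b. f i)"
  using prod.distinct_set_conv_list[OF distinct_upt, of f a "Suc b"]
  by (simp only: set_upt atLeastLessThanSuc_atLeastAtMost)

lemma prod_indices_except:
  fixes f :: "nat \<Rightarrow> 'b::comm_monoid_mult"
  assumes "s \<in> {1..n}"
  shows "(\<Prod>i=1..n. f i) = f s * (\<Prod>i\<leftarrow>indices_except n s. f i)"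
proof -
  have "(\<Prod>i=1..n. f i) = (\<Prod>i\<leftarrow>[1..<Suc n]. f i)" by (rule prod_list_upt_Suc[symmetric])
  then show ?thesis
    unfolding upt_Suc_split_at[OF assms] indices_except_def by (simp add: mult.left_commute)
qed

lemma prod_ge_min_footprint_indices_except:
  fixes D b :: "nat \<Rightarrow> nat"
  assumes mono: "mono_on {1..n} D" and b: "\<forall>i\<in>{1..n}. 1 \<le> b i \<and> b i \<le> D i"
    and budget: "(\<Sum>i=1..n. D i - b i) \<le> d" and s: "s \<in> {1..n}"
  shows "b s * min_footprint (map D (indices_except n s)) (d - (D s - b s)) \<le> (\<Prod>i=1..n. b i)"
proof -
  have set: "set (indices_except n s) \<subseteq> {1..n}" using s set_indices_except by simp
  have "sorted_wrt (\<lambda>i j. D i \<le> D j) (indices_except n s)"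
    using sorted_indices_except[of n s] set mono
    by (auto intro: sorted_wrt_mono_rel[rotated] simp: mono_on_def subset_iff)
  then have "sorted (map D (indices_except n s))" by (simp add: sorted_wrt_map)
  moreover have "(\<Sum>i\<leftarrow>indices_except n s. D i - b i) \<le> d - (D s - b s)"
    using budget sum_indices_except[OF s, of "\<lambda>i. D i - b i"] by linarith
  ultimately have "min_footprint (map D (indices_except n s)) (d - (D s - b s)) \<le> (\<Prod>i\<leftarrow>indices_except n s. b i)"
    using b set by (intro min_footprint_le_prod) auto
  then show ?thesis unfolding prod_indices_except[OF s] by simp
qed

lemma weight_gap_small_factor:
  fixes D :: "nat \<Rightarrow> nat"
  assumes k: "k < n" and s: "s \<in> {1..k+1}"
    and above: "\<forall>j\<in>{k+2..n}. D s < D j"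
    and l: "l < D (k+1)" and less: "D (k+1) - l < b" and b: "b \<le> D s"
  shows "(D (k+1) - l) * (\<Prod>i=k+2..n. D i)
         < b * min_footprint (map D (indices_except n s)) ((\<Sum>i=1..k. D i - 1) + l - (D s - b))"
proof -
  let ?m = "D (k+1) - l" and ?H = "[k+2..<Suc n]"
  have "(\<Sum>i=1..k. D i - 1) + (D (k+1) - 1) = (D s - 1) + (\<Sum>i\<leftarrow>indices_except (k+1) s. D i - 1)"
    using sum_indices_except[OF s, of "\<lambda>i. D i - 1"] by simp
  then have "(\<Sum>i=1..k. D i - 1) + l - (D s - b)
      = sum_list (map (\<lambda>x. x - 1) (map D (indices_except (k+1) s))) + (b - ?m)"
    using l less b by (simp add: comp_def)
  moreover have "indices_except n s = indices_except (k+1) s @ ?H"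
    using indices_except_append[of s "k+1" n] s k by (simp del: upt_Suc)
  ultimately have G: "min_footprint (map D (indices_except n s)) ((\<Sum>i=1..k. D i - 1) + l - (D s - b))
      = min_footprint (map D ?H) (b - ?m)"
    by (simp only: map_append min_footprint_append)
  show ?thesis
  proof (cases "k + 2 \<le> n")
    case False
    then show ?thesis using G less by simp
  next
    case True
    define R where "R = (\<Prod>i\<leftarrow>[Suc (k+2)..<Suc n]. D i)"
    have H: "?H = (k+2) # [Suc (k+2)..<Suc n]" by (rule upt_conv_Cons) (use True in simp)
    have "D s < D (k+2)" using above True by simp
    then have "\<not> D (k+2) - 1 \<le> b - ?m" using b less l by linarith
    then have "min_footprint (map D ?H) (b - ?m) = (D (k+2) - (b - ?m)) * R"
      unfolding H R_def by (simp del: upt_Suc)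
    moreover have "(\<Prod>i=k+2..n. D i) = D (k+2) * R"
      by (simp only: prod_list_upt_Suc[symmetric] H R_def list.map prod_list.Cons)
    moreover have "0 < R" unfolding R_def prod_list_upt_Suc
    proof (intro prod_pos)
      fix j assume "j \<in> {Suc (k+2)..n}"
      then show "0 < D j" using above by (metis atLeastAtMost_iff gr_zeroI less_zeroE Suc_leD)
    qed
    moreover have "?m * D (k+2) < b * (D (k+2) - (b - ?m))"
      using diff_mult_less_mult_diff[of "b - ?m" b "D (k+2)"] less b \<open>D s < D (k+2)\<close> by simp
    ultimately show ?thesis using G by (simp add: mult.assoc[symmetric])
  qed
qed

lemma weight_gap_large_factor:
  fixes D :: "nat \<Rightarrow> nat"
  assumes mono: "mono_on {1..n} D" and k: "k < n" and s: "s \<in> {1..k}"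
    and b: "2 \<le> b" "b \<le> D s" and greater: "b < D (k+1) - l"
  shows "(D (k+1) - l) * (\<Prod>i=k+2..n. D i)
         < b * min_footprint (map D (indices_except n s)) ((\<Sum>i=1..k. D i - 1) + l - (D s - b))"
proof -
  let ?m = "D (k+1) - l" and ?H = "[k+2..<Suc n]" and ?P = "\<Prod>i=k+2..n. D i"
  have "(\<Sum>i=1..k. D i - 1) = (D s - 1) + (\<Sum>i\<leftarrow>indices_except k s. D i - 1)"
    using sum_indices_except[OF s] .
  then have "(\<Sum>i=1..k. D i - 1) + l - (D s - b)
      = sum_list (map (\<lambda>x. x - 1) (map D (indices_except k s))) + (D (k+1) - 1 - (?m - b))"
    using b greater by (simp add: comp_def)
  moreover have "indices_except n s = indices_except k s @ (k+1) # ?H"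
    using indices_except_append[of s k n] s k upt_conv_Cons[of "k+1" "Suc n"] by (simp del: upt_Suc)
  ultimately have "min_footprint (map D (indices_except n s)) ((\<Sum>i=1..k. D i - 1) + l - (D s - b))
      = min_footprint (D (k+1) # map D ?H) (D (k+1) - 1 - (?m - b))"
    by (simp only: map_append list.map min_footprint_append)
  also have "\<dots> = (?m - b + 1) * ?P"
  proof -
    have "\<not> D (k+1) - 1 \<le> D (k+1) - 1 - (?m - b)" and "D (k+1) - (D (k+1) - 1 - (?m - b)) = ?m - b + 1"
      using b greater by linarith+
    then show ?thesis by (simp del: upt_Suc add: prod_list_upt_Suc)
  qed
  finally have G: "min_footprint (map D (indices_except n s)) ((\<Sum>i=1..k. D i - 1) + l - (D s - b))
      = (?m - b + 1) * ?P" .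
  have P: "0 < ?P"
  proof (intro prod_pos)
    fix j assume "j \<in> {k+2..n}"
    then have "D (k+1) \<le> D j" using mono k by (auto simp: mono_on_def)
    then show "0 < D j" using b greater by linarith
  qed
  have "?m < b * (?m - b + 1)"
  proof -
    have "0 < b - 1" "b - 1 + 1 < ?m" and eqs: "b - 1 + 1 = b" "?m - (b - 1) = ?m - b + 1"
      using b greater by linarith+
    from less_Suc_mult_diff[OF this(1,2)] show ?thesis unfolding eqs .
  qed
  then have "?m * ?P < b * (?m - b + 1) * ?P" using P by (rule mult_less_mono1)
  then show ?thesis unfolding G by (simp only: mult.assoc)
qed

lemma weight_gap:
  fixes D b :: "nat \<Rightarrow> nat"
  assumes mono: "mono_on {1..n} D" and b: "\<forall>i\<in>{1..n}. 1 \<le> b i \<and> b i \<le> D i"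
    and budget: "(\<Sum>i=1..n. D i - b i) \<le> (\<Sum>i=1..k. D i - 1) + l"
    and k: "k < n" and l: "l < D (k+1)" and s: "s \<in> {1..n}" and \<delta>: "2 \<le> \<delta>" "\<delta> \<le> b s"
    and not_i: "\<not> (k + 2 \<le> n \<and> D (k+2) \<le> D s)"
    and not_ii: "\<not> (D s \<le> D (k+1) \<and> 0 \<le> int (D s) - (int (D (k+1)) - int l) \<and>
                    int (D s) - (int (D (k+1)) - int l) < int (D s) - int \<delta> + 1)"
  shows "(D (k+1) - l) * (\<Prod>i=k+2..n. D i) < (\<Prod>i=1..n. b i)"
proof -
  let ?d = "(\<Sum>i=1..k. D i - 1) + l"
  have s_le: "s \<le> k + 1"
  proof (rule ccontr)
    assume "\<not> s \<le> k + 1"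
    then have "k + 2 \<le> n" "D (k+2) \<le> D s" using s mono by (auto simp: mono_on_def)
    then show False using not_i by blast
  qed
  have above: "\<forall>j\<in>{k+2..n}. D s < D j"
  proof
    fix j assume j: "j \<in> {k+2..n}"
    then have "D s < D (k+2)" using not_i by auto
    also have "D (k+2) \<le> D j" using j mono by (auto simp: mono_on_def)
    finally show "D s < D j" .
  qed
  have bs: "b s \<le> D s" using b s by simp
  have "D s \<le> D (k+1)" using mono s s_le k by (auto simp: mono_on_def)
  then have "D (k+1) - l < \<delta> \<or> D s < D (k+1) - l" using not_ii l by linarith
  then have "(D (k+1) - l) * (\<Prod>i=k+2..n. D i)
      < b s * min_footprint (map D (indices_except n s)) (?d - (D s - b s))"
  proof
    assume "D (k+1) - l < \<delta>"
    then show ?thesis using s s_le bs above l \<delta> by (intro weight_gap_small_factor[OF k]) auto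
  next
    assume "D s < D (k+1) - l"
    moreover have "s \<noteq> k + 1" using calculation by auto
    ultimately show ?thesis using s s_le bs \<delta> by (intro weight_gap_large_factor[OF mono k]) auto
  qed
  also have "\<dots> \<le> (\<Prod>i=1..n. b i)" by (rule prod_ge_min_footprint_indices_except[OF mono b budget s])
  finally show ?thesis .
qed


section \<open>Weights in the restricted code\<close>

definition reduce_monomial :: "nat \<Rightarrow> (nat \<Rightarrow> 'a set) \<Rightarrow> (nat \<Rightarrow> nat) \<Rightarrow> nat \<Rightarrow> nat" where
  "reduce_monomial n K e = (\<lambda>i. if i \<in> {1..n} then reduce_exp (card (K i)) (e i) else 0)"

lemma evalp_reduce_monomial:
  fixes K :: "nat \<Rightarrow> 'a::{finite,field} set"
  assumes sub: "\<forall>i\<in>{1..n}. is_subfield (K i)" and E: "finite E" and x: "x \<in> grid n K"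
  shows "evalp n E c x
       = evalp n (reduce_monomial n K ` E) (\<lambda>e'. \<Sum>e\<in>{e \<in> E. reduce_monomial n K e = e'}. c e) x"
proof -
  let ?r = "reduce_monomial n K"
  have mon: "(\<Prod>i=1..n. x i ^ e i) = (\<Prod>i=1..n. x i ^ ?r e i)" for e
  proof (rule prod.cong[OF refl])
    fix i assume i: "i \<in> {1..n}"
    then have "x i \<in> K i" using x unfolding grid_def by auto
    then show "x i ^ e i = x i ^ ?r e i"
      using subfield_power_reduce_exp[of "K i" "x i" "e i"] sub i unfolding reduce_monomial_def by simp
  qed
  have "evalp n E c x = (\<Sum>e\<in>E. c e * (\<Prod>i=1..n. x i ^ ?r e i))"
    unfolding evalp_def using mon by simp
  also have "\<dots> = (\<Sum>e'\<in>?r ` E. \<Sum>e\<in>{e \<in> E. ?r e = e'}. c e * (\<Prod>i=1..n. x i ^ ?r e i))"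
    by (rule sum.image_gen[OF E])
  also have "\<dots> = (\<Sum>e'\<in>?r ` E. (\<Sum>e\<in>{e \<in> E. ?r e = e'}. c e) * (\<Prod>i=1..n. x i ^ e' i))"
    by (intro sum.cong refl) (auto simp: sum_distrib_right)
  finally show ?thesis unfolding evalp_def .
qed

lemma eval_code_footprint:
  fixes K :: "nat \<Rightarrow> 'a::{finite,field} set"
  assumes sub: "\<forall>i\<in>{1..n}. is_subfield (K i)" and E: "finite E"
    and v: "v \<in> eval_code n K E" and nz: "\<exists>x\<in>grid n K. v x \<noteq> 0"
  shows "\<exists>e\<in>E. (\<Prod>i=1..n. card (K i) - reduce_monomial n K e i) \<le> hamming_wt (grid n K) v"
proof -
  let ?r = "reduce_monomial n K"
  obtain c where vc: "v = (\<lambda>x\<in>grid n K. evalp n E c x)" using v unfolding eval_code_def by blast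
  define c' where "c' e' = (\<Sum>e\<in>{e \<in> E. ?r e = e'}. c e)" for e'
  have ev: "v x = evalp n (?r ` E) c' x" if "x \<in> grid n K" for x
    using evalp_reduce_monomial[OF sub E that, of c] that unfolding vc c'_def by simp
  have "\<exists>a\<in>?r ` E. c' a \<noteq> 0 \<and> (\<Prod>i=1..n. card (K i) - a i) \<le> card {x \<in> grid n K. evalp n (?r ` E) c' x \<noteq> 0}"
  proof (rule footprint_bound)
    show "\<forall>a\<in>?r ` E. \<forall>i\<in>{1..n}. a i < card (K i)"
      using sub card_subfield_ge_2 reduce_exp_less unfolding reduce_monomial_def by fastforce
    show "\<forall>e1\<in>?r ` E. \<forall>e2\<in>?r ` E. (\<forall>i\<in>{1..n}. e1 i = e2 i) \<longrightarrow> e1 = e2"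
      unfolding reduce_monomial_def by (auto simp: fun_eq_iff)
    show "\<exists>a\<in>?r ` E. c' a \<noteq> 0" using nz ev unfolding evalp_def by (metis (no_types, lifting) sum.neutral mult_zero_left)
  qed (use E in simp)
  moreover have "card {x \<in> grid n K. evalp n (?r ` E) c' x \<noteq> 0} = hamming_wt (grid n K) v"
    unfolding hamming_wt_def using ev by (intro arg_cong[where f=card]) auto
  ultimately show ?thesis by auto
qed

lemma restricted_code_weight_gt:
  fixes K :: "nat \<Rightarrow> 'a::{finite,field} set"
  assumes sub: "\<forall>i\<in>{1..n}. is_subfield (K i)" and mono: "mono_on {1..n} (\<lambda>i. card (K i))"
    and k: "k < n" and l: "l < card (K (k+1))" and s: "s \<in> {1..n}" and \<delta>: "2 \<le> \<delta>"
    and not_i: "\<not> (k + 2 \<le> n \<and> card (K (k+2)) \<le> card (K s))"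
    and not_ii: "\<not> (card (K s) \<le> card (K (k+1)) \<and> 0 \<le> int (card (K s)) - (int (card (K (k+1))) - int l) \<and>
                    int (card (K s)) - (int (card (K (k+1))) - int l) < int (card (K s)) - int \<delta> + 1)"
    and v: "v \<in> restricted_code n K \<delta> s ((\<Sum>i=1..k. card (K i) - 1) + l)"
    and nz: "\<exists>x\<in>grid n K. v x \<noteq> 0"
  shows "(card (K (k+1)) - l) * (\<Prod>i=k+2..n. card (K i)) < hamming_wt (grid n K) v"
proof -
  let ?D = "\<lambda>i. card (K i)" and ?d = "(\<Sum>i=1..k. card (K i) - 1) + l"
  define E where "E = {e \<in> monomials_le n ?d. int (e s) < int (?D s) - int \<delta> + 1}"
  have "finite E" unfolding E_def using finite_monomials_le by simp
  then obtain e where e: "e \<in> E"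
    and wt: "(\<Prod>i=1..n. ?D i - reduce_monomial n K e i) \<le> hamming_wt (grid n K) v"
    using eval_code_footprint[OF sub _ _ nz] v unfolding restricted_code_def E_def by blast
  define a where "a = reduce_monomial n K e"
  have a_less: "a i < ?D i" if "i \<in> {1..n}" for i
  proof -
    have "2 \<le> ?D i" using sub that by (intro card_subfield_ge_2) auto
    then show ?thesis using that unfolding a_def reduce_monomial_def by (simp add: reduce_exp_less)
  qed
  have "(?D (k+1) - l) * (\<Prod>i=k+2..n. ?D i) < (\<Prod>i=1..n. ?D i - a i)"
  proof (rule weight_gap[OF mono _ _ k l s \<delta>(1) _ not_i not_ii])
    show "\<forall>i\<in>{1..n}. 1 \<le> ?D i - a i \<and> ?D i - a i \<le> ?D i" using a_less by fastforce
    have "(\<Sum>i=1..n. ?D i - (?D i - a i)) = (\<Sum>i=1..n. a i)"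
      using a_less by (intro sum.cong) (auto simp: less_imp_le)
    also have "\<dots> \<le> (\<Sum>i=1..n. e i)"
      using reduce_exp_le by (intro sum_mono) (simp add: a_def reduce_monomial_def)
    also have "\<dots> \<le> ?d" using e unfolding E_def monomials_le_def by simp
    finally show "(\<Sum>i=1..n. ?D i - (?D i - a i)) \<le> ?d" .
    have "e s < ?D s" "int (e s) < int (?D s) - int \<delta> + 1" using e \<delta> unfolding E_def by auto
    then show "\<delta> \<le> ?D s - a s"
      using s reduce_exp_eq unfolding a_def reduce_monomial_def by simp
  qed
  then show ?thesis using wt unfolding a_def by simp
qed

lemma finite_hamming_wts:
  assumes "finite X"
  shows "finite {hamming_wt X v | v. P v}"
proof (rule finite_subset)
  show "{hamming_wt X v | v. P v} \<subseteq> {..card X}"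
    unfolding hamming_wt_def using assms by (auto intro: card_mono)
qed simp

lemma min_dist_le_hamming_wt:
  assumes "finite X" and "v \<in> C" and "\<exists>x\<in>X. v x \<noteq> 0"
  shows "min_dist X C \<le> hamming_wt X v"
  unfolding min_dist_def using assms by (intro Min_le finite_hamming_wts) auto

lemma less_min_dist:
  assumes "finite X" and "v \<in> C" and "\<exists>x\<in>X. v x \<noteq> 0"
    and "\<And>u. u \<in> C \<Longrightarrow> \<exists>x\<in>X. u x \<noteq> 0 \<Longrightarrow> w < hamming_wt X u"
  shows "w < min_dist X C"
  unfolding min_dist_def using assms by (subst Min_gr_iff) (auto intro: finite_hamming_wts)

lemma one_in_restricted_code:
  assumes "1 \<le> int (card (K s)) - int \<delta> + 1"
  shows "(\<lambda>x\<in>grid n K. 1) \<in> restricted_code n K \<delta> s d"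
proof -
  define E where "E = {e \<in> monomials_le n d. int (e s) < int (card (K s)) - int \<delta> + 1}"
  have "finite E" unfolding E_def using finite_monomials_le by simp
  moreover have "(\<lambda>_. 0) \<in> E" using assms unfolding E_def monomials_le_def by simp
  ultimately have one: "evalp n E (\<lambda>e. if e = (\<lambda>_. 0) then 1 else 0) x = 1" for x
  proof -
    have "evalp n E (\<lambda>e. if e = (\<lambda>_. 0) then 1 else 0) x
        = (\<Sum>e\<in>E. if e = (\<lambda>_. 0) then \<Prod>i=1..n. x i ^ e i else 0)"
      unfolding evalp_def by (intro sum.cong) auto
    then show ?thesis using \<open>finite E\<close> \<open>(\<lambda>_. 0) \<in> E\<close> by simp
  qed
  have "(\<lambda>x\<in>grid n K. 1) = (\<lambda>x\<in>grid n K. evalp n E (\<lambda>e. if e = (\<lambda>_. 0) then 1 else 0) x)"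
    by (rule restrict_ext) (simp only: one)
  then show ?thesis unfolding restricted_code_def eval_code_def E_def[symmetric] by blast
qed

lemma mono_on_card_chain:
  fixes K :: "nat \<Rightarrow> 'a::finite set"
  assumes chain: "\<forall>i. 1 \<le> i \<longrightarrow> i < n \<longrightarrow> K i \<subseteq> K (i + 1)"
  shows "mono_on {1..n} (\<lambda>i. card (K i))"
proof (rule mono_onI)
  fix i j assume "i \<in> {1..n}" "j \<in> {1..n}" "i \<le> j"
  have "K i \<subseteq> K j" using \<open>i \<le> j\<close>
  proof (induction j rule: dec_induct)
    case (step m)
    have "1 \<le> m" "m < n" using step \<open>i \<in> {1..n}\<close> \<open>j \<in> {1..n}\<close> by auto
    then have "K m \<subseteq> K (m + 1)" using chain by blast
    then show ?case using step.IH by auto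
  qed simp
  then show "card (K i) \<le> card (K j)" by (simp add: card_mono)
qed

lemma grid_nonempty: "\<forall>i\<in>{1..n}. K i \<noteq> {} \<Longrightarrow> grid n K \<noteq> {}"
  unfolding grid_def by (simp add: PiE_eq_empty_iff)

lemma restricted_code_min_dist_gt:
  fixes K :: "nat \<Rightarrow> 'a::{finite,field} set"
  assumes sub: "\<forall>i\<in>{1..n}. is_subfield (K i)" and mono: "mono_on {1..n} (\<lambda>i. card (K i))"
    and k: "k < n" and l: "l < card (K (k+1))" and s: "s \<in> {1..n}" and \<delta>: "2 \<le> \<delta>"
    and r: "1 \<le> int (card (K s)) - int \<delta> + 1"
    and not_i: "\<not> (k + 2 \<le> n \<and> card (K (k+2)) \<le> card (K s))"
    and not_ii: "\<not> (card (K s) \<le> card (K (k+1)) \<and> 0 \<le> int (card (K s)) - (int (card (K (k+1))) - int l) \<and>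
                    int (card (K s)) - (int (card (K (k+1))) - int l) < int (card (K s)) - int \<delta> + 1)"
  shows "(card (K (k+1)) - l) * (\<Prod>i=k+2..n. card (K i))
         < min_dist (grid n K) (restricted_code n K \<delta> s ((\<Sum>i=1..k. card (K i) - 1) + l))"
proof (rule less_min_dist[OF finite_grid one_in_restricted_code[where K=K and n=n, OF r]])
  have "grid n K \<noteq> {}" using sub by (intro grid_nonempty) (auto simp: is_subfield_def)
  then show "\<exists>x\<in>grid n K. (\<lambda>x\<in>grid n K. 1) x \<noteq> (0::'a)" by auto
qed (rule restricted_code_weight_gt[OF sub mono k l s \<delta> not_i not_ii])

theorem mainTheorem10:
  fixes K :: "nat \<Rightarrow> 'a::{finite,field} set"
    and n \<delta> s k l d :: nat
  assumes sub: "\<forall>i\<in>{1..n}. is_subfield (K i)"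
    and chain: "\<forall>i. 1 \<le> i \<longrightarrow> i < n \<longrightarrow> K i \<subseteq> K (i + 1)"
    and n2: "n \<ge> 2"
    and delta2: "\<delta> \<ge> 2"
    and s_rng: "s \<in> {1..n}"
    and r_pos: "int (card (K s)) - int \<delta> + 1 \<ge> 1"
    and k_lt: "k < n"
    and l_pos: "0 < l" and l_le: "l \<le> card (K (k + 1)) - 1"
    and d_def: "d = (\<Sum>i=1..k. card (K i) - 1) + l"
    and eq: "min_dist (grid n K) (restricted_code n K \<delta> s d)
             = min_dist (grid n K) (affine_cartesian_code n K d)"
  shows "(k + 2 \<le> n \<and> card (K (k + 2)) \<le> card (K s)) \<or>
         (card (K s) \<le> card (K (k + 1)) \<and>
          0 \<le> int (card (K s)) - (int (card (K (k + 1))) - int l) \<and>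
          int (card (K s)) - (int (card (K (k + 1))) - int l) < int (card (K s)) - int \<delta> + 1)"
proof (rule ccontr)
  assume "\<not> ?thesis"
  then have not_i: "\<not> (k + 2 \<le> n \<and> card (K (k + 2)) \<le> card (K s))"
    and not_ii: "\<not> (card (K s) \<le> card (K (k + 1)) \<and>
          0 \<le> int (card (K s)) - (int (card (K (k + 1))) - int l) \<and>
          int (card (K s)) - (int (card (K (k + 1))) - int l) < int (card (K s)) - int \<delta> + 1)"
    by auto
  let ?W = "(card (K (k + 1)) - l) * (\<Prod>i=k+2..n. card (K i))"
  have "2 \<le> card (K (k + 1))" using sub k_lt by (intro card_subfield_ge_2) auto
  then have l: "l < card (K (k + 1))" using l_le by linarith
  obtain v where "v \<in> affine_cartesian_code n K d" "\<exists>x\<in>grid n K. v x \<noteq> 0" "hamming_wt (grid n K) v = ?W"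
    using affine_cartesian_code_weight[OF sub k_lt l] unfolding d_def by blast
  then have "min_dist (grid n K) (affine_cartesian_code n K d) \<le> ?W"
    using min_dist_le_hamming_wt[OF finite_grid] by metis
  moreover have "?W < min_dist (grid n K) (restricted_code n K \<delta> s d)"
    unfolding d_def
    by (rule restricted_code_min_dist_gt[OF sub mono_on_card_chain[OF chain] k_lt l s_rng delta2 r_pos
          not_i not_ii])
  ultimately show False using eq by simp
qed

end
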